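(* Let $\Pi_n$ be a PARITY$_n$ program such that no rule $y\leftarrow B$ of $\Pi_n$ has $y\in var(B)$ and every rule body of $\Pi_n$ is consistent. Then there is a standard PARITY$_n$ program $\Pi_n'$ (again with no rule $y\leftarrow B$ having $y\in var(B)$ and with all bodies consistent) such that $|\Pi_n'|\le|\Pi_n|$.
   Context: A rule element is one of $\top$, $\bot$, $x$, $not\ x$, $not\ not\ x$, where $x$ is a variable. A (canonical) rule is $H\leftarrow B$ with $H$ a variable or $\bot$ and $B$ a finite set of rule elements; a canonical program is a finite set of rules. For a body $B$, $var(B)=\{e\in B: e\text{ is a variable}\}$. For a set of variables $I$: $I\models\top$; $I\not\models\bot$; $I\models x$ iff $I\models not\ not\ x$ iff $x\in I$; $I\models not\ x$ iff $x\notin I$; $I\models B$ iff $I$ satisfies every element of $B$; $I$ is closed under $H\leftarrow B$ if $I\models B$ implies $I\models H$. The reduct $\Pi^I$ replaces $not\ not\ x$ by $\top$ if $x\in I$ else $\bot$, and $not\ x$ by $\top$ if $x\notin I$ else $\bot$; $I$ is an answer set of $\Pi$ if $I$ is the least set closed under all rules of $\Pi^I$; $Ans(\Pi)$ is the set of answer sets; $var(\Pi)$ the set of variables occurring in $\Pi$; $|\Pi|$ the number of rules. Strings $w\in\{0,1\}^n$ are identified with $\{x_i:w_i=1\}$; PARITY$_n$ is the set of strings in $\{0,1\}^n$ with an odd number of 1's; a PARITY$_n$ program is a canonical program $\Pi$ with $var(\Pi)=\{x_1,\dots,x_n\}$ and $Ans(\Pi)=$ PARITY$_n$. For a set $B$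 of rule elements, $S(B)=\{I\subseteq\{x_1,\dots,x_n\}: I\models B\}$; $B$ is consistent if $S(B)\neq\emptyset$. A PARITY$_n$ program $\Pi$ is standard if for every rule $x\leftarrow B\in\Pi$ with head a variable $x$: whenever $S(B\cup\{x\})$ has exactly one element, $not\ not\ x\notin B$. *)

theory Defs
  imports Main
begin

text \<open>Variables are natural numbers; variable x_i is the number i.\<close>

datatype elem = ETop | EBot | Pos nat | Neg nat | NNeg nat
  (* \<top>, \<bot>, x, not x, not not x *)

datatype head = HVar nat | HBot

type_synonym rule = "head \<times> elem set"
type_synonym program = "rule set"

definition canonical :: "program \<Rightarrow> bool" where
  "canonical P \<longleftrightarrow> finite P \<and> (\<forall>r\<in>P. finite (snd r))"

fun sat_elem :: "nat set \<Rightarrow> elem \<Rightarrow> bool" where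
  "sat_elem I ETop = True"
| "sat_elem I EBot = False"
| "sat_elem I (Pos x) = (x \<in> I)"
| "sat_elem I (Neg x) = (x \<notin> I)"
| "sat_elem I (NNeg x) = (x \<in> I)"

definition sat_body :: "nat set \<Rightarrow> elem set \<Rightarrow> bool" where
  "sat_body I B \<longleftrightarrow> (\<forall>e\<in>B. sat_elem I e)"

fun sat_head :: "nat set \<Rightarrow> head \<Rightarrow> bool" where
  "sat_head I (HVar x) = (x \<in> I)"
| "sat_head I HBot = False"

definition closed_under :: "nat set \<Rightarrow> program \<Rightarrow> bool" where
  "closed_under I P \<longleftrightarrow> (\<forall>(H, B)\<in>P. sat_body I B \<longrightarrow> sat_head I H)"

fun reduct_elem :: "nat set \<Rightarrow> elem \<Rightarrow> elem" where
  "reduct_elem I (NNeg x) = (if x \<in> I then ETop else EBot)"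
| "reduct_elem I (Neg x) = (if x \<notin> I then ETop else EBot)"
| "reduct_elem I e = e"

definition reduct :: "program \<Rightarrow> nat set \<Rightarrow> program" where
  "reduct P I = (\<lambda>(H, B). (H, reduct_elem I ` B)) ` P"

definition answer_set :: "program \<Rightarrow> nat set \<Rightarrow> bool" where
  "answer_set P I \<longleftrightarrow> closed_under I (reduct P I) \<and>
     (\<forall>J. closed_under J (reduct P I) \<longrightarrow> I \<subseteq> J)"

definition Ans :: "program \<Rightarrow> nat set set" where
  "Ans P = {I. answer_set P I}"

fun elem_vars :: "elem \<Rightarrow> nat set" where
  "elem_vars (Pos x) = {x}"
| "elem_vars (Neg x) = {x}"
| "elem_vars (NNeg x) = {x}"
| "elem_vars _ = {}"

fun head_vars :: "head \<Rightarrow> nat set" where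
  "head_vars (HVar x) = {x}"
| "head_vars HBot = {}"

definition prog_vars :: "program \<Rightarrow> nat set" where
  "prog_vars P = (\<Union>(H, B)\<in>P. head_vars H \<union> (\<Union>e\<in>B. elem_vars e))"

text \<open>var(B): the elements of B that are (plain) variables.\<close>
definition body_var :: "elem set \<Rightarrow> nat set" where
  "body_var B = {x. Pos x \<in> B}"

definition PARITY :: "nat \<Rightarrow> nat set set" where
  "PARITY n = {I. I \<subseteq> {1..n} \<and> odd (card I)}"

definition parity_program :: "nat \<Rightarrow> program \<Rightarrow> bool" where
  "parity_program n P \<longleftrightarrow> canonical P \<and> prog_vars P = {1..n} \<and> Ans P = PARITY n"

definition S :: "nat \<Rightarrow> elem set \<Rightarrow> nat set set" where
  "S n B = {I. I \<subseteq> {1..n} \<and> sat_body I B}"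

definition consistent :: "nat \<Rightarrow> elem set \<Rightarrow> bool" where
  "consistent n B \<longleftrightarrow> S n B \<noteq> {}"

definition standard :: "nat \<Rightarrow> program \<Rightarrow> bool" where
  "standard n P \<longleftrightarrow> parity_program n P \<and>
     (\<forall>x B. (HVar x, B) \<in> P \<longrightarrow> card (S n (insert (Pos x) B)) = 1 \<longrightarrow> NNeg x \<notin> B)"

definition no_self_dep :: "program \<Rightarrow> bool" where
  "no_self_dep P \<longleftrightarrow> (\<forall>y B. (HVar y, B) \<in> P \<longrightarrow> y \<notin> body_var B)"

definition bodies_consistent :: "nat \<Rightarrow> program \<Rightarrow> bool" where
  "bodies_consistent n P \<longleftrightarrow> (\<forall>(H, B)\<in>P. consistent n B)"

end

theory Submission
  imports Defs
begin

(* A rule x <- B with "not not x" in B and exactly one model I0 of B (which then contains x)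
   only constrains the two candidates I0 and I0 - {x}, and exactly one of them has odd size.
   If |I0| is odd, dropping "not not x" from B keeps I0 an answer set and still excludes
   I0 - {x}; if |I0| is even, the constraint  False <- B  excludes I0 just as well. Either
   replacement removes one nonstandard rule without creating another or adding rules, so
   iterating it yields a standard program. *)

lemma reduct_Un: "reduct (P \<union> Q) I = reduct P I \<union> reduct Q I"
  by (simp add: reduct_def image_Un)

lemma closed_under_Un: "closed_under J (P \<union> Q) \<longleftrightarrow> closed_under J P \<and> closed_under J Q"
  by (auto simp: closed_under_def)

lemma closed_under_reduct_singleton [simp]:
  "closed_under J (reduct {(H, B)} I) \<longleftrightarrow> (sat_body J (reduct_elem I ` B) \<longrightarrow> sat_head J H)"
  by (simp add: closed_under_def reduct_def)

lemma closed_under_reduct_iff: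
  "closed_under J (reduct P I) \<longleftrightarrow>
     (\<forall>(H, B)\<in>P. sat_body J (reduct_elem I ` B) \<longrightarrow> sat_head J H)"
  by (auto simp: closed_under_def reduct_def)

lemma sat_body_reduct_mono:
  assumes "J \<subseteq> K" "sat_body J (reduct_elem I ` B)"
  shows "sat_body K (reduct_elem I ` B)"
proof -
  have "sat_elem K (reduct_elem I e)" if "sat_elem J (reduct_elem I e)" for e
    using that assms(1) by (cases e) (auto split: if_splits)
  then show ?thesis using assms(2) by (auto simp: sat_body_def)
qed

lemma sat_body_reduct_self [simp]: "sat_body I (reduct_elem I ` B) \<longleftrightarrow> sat_body I B"
proof -
  have "sat_elem I (reduct_elem I e) = sat_elem I e" for e
    by (cases e) auto
  then show ?thesis by (simp add: sat_body_def)
qed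

lemma closed_under_reduct_Int:
  assumes "closed_under J (reduct P I)" "closed_under K (reduct P I)"
  shows "closed_under (J \<inter> K) (reduct P I)"
  unfolding closed_under_reduct_iff
proof (intro ballI, clarify)
  fix H B assume "(H, B) \<in> P" "sat_body (J \<inter> K) (reduct_elem I ` B)"
  then have "sat_head J H" "sat_head K H"
    using assms sat_body_reduct_mono[of "J \<inter> K"] by (fastforce simp: closed_under_reduct_iff)+
  then show "sat_head (J \<inter> K) H" by (cases H) auto
qed

text \<open>Since closed sets of a reduct are closed under intersection, minimality of an answer set
  only needs to be tested below it.\<close>

lemma answer_set_iff_minimal_below:
  "answer_set P I \<longleftrightarrow>
     closed_under I (reduct P I) \<and> (\<forall>J\<subseteq>I. closed_under J (reduct P I) \<longrightarrow> J = I)"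
proof
  assume "closed_under I (reduct P I) \<and> (\<forall>J\<subseteq>I. closed_under J (reduct P I) \<longrightarrow> J = I)"
  moreover have "I \<subseteq> J" if "closed_under J (reduct P I)" "closed_under I (reduct P I)"
      "\<forall>J\<subseteq>I. closed_under J (reduct P I) \<longrightarrow> J = I" for J
    using that closed_under_reduct_Int[OF that(1,2)] by blast
  ultimately show "answer_set P I" by (simp add: answer_set_def)
qed (auto simp: answer_set_def)

lemma answer_set_replace_rule:
  assumes "r \<in> P"
    and "\<And>J. J \<subseteq> I \<Longrightarrow> closed_under J (reduct {r'} I) \<longleftrightarrow> closed_under J (reduct {r} I)"
  shows "answer_set (insert r' (P - {r})) I \<longleftrightarrow> answer_set P I"
proof -
  have "P = {r} \<union> (P - {r})" "insert r' (P - {r}) = {r'} \<union> (P - {r})"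
    using assms(1) by auto
  then have "closed_under J (reduct (insert r' (P - {r})) I) \<longleftrightarrow> closed_under J (reduct P I)"
    if "J \<subseteq> I" for J
    using assms(2)[OF that] by (metis reduct_Un closed_under_Un)
  then show ?thesis by (simp add: answer_set_iff_minimal_below)
qed

lemma answer_set_replace_unsatisfied_rule:
  assumes "(H, B) \<in> P" "\<not> sat_body I B" "\<not> sat_body I B'"
  shows "answer_set (insert (H', B') (P - {(H, B)})) I \<longleftrightarrow> answer_set P I"
proof (rule answer_set_replace_rule[OF assms(1)])
  fix J assume "J \<subseteq> I"
  have "\<not> sat_body J (reduct_elem I ` C)" if "\<not> sat_body I C" for C
    using that sat_body_reduct_mono[OF \<open>J \<subseteq> I\<close>] sat_body_reduct_self by blast
  then show "closed_under J (reduct {(H', B')} I) \<longleftrightarrow> closed_under J (reduct {(H, B)} I)"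
    using assms(2,3) by simp
qed

lemma violated_rule_not_answer_set:
  assumes "(H, B) \<in> P" "sat_body I B" "\<not> sat_head I H"
  shows "\<not> answer_set P I"
proof
  assume "answer_set P I"
  then have "closed_under I (reduct P I)" by (simp add: answer_set_def)
  then show False using assms unfolding closed_under_reduct_iff by auto
qed

lemma answer_set_subset_prog_vars:
  assumes "answer_set P I"
  shows "I \<subseteq> prog_vars P"
proof -
  have closed: "closed_under I (reduct P I)"
    and minimal: "\<forall>J\<subseteq>I. closed_under J (reduct P I) \<longrightarrow> J = I"
    using assms by (auto simp: answer_set_iff_minimal_below)
  have "closed_under (I \<inter> prog_vars P) (reduct P I)"
    unfolding closed_under_reduct_iff
  proof (intro ballI, clarify)
    fix H B assume HB: "(H, B) \<in> P" "sat_body (I \<inter> prog_vars P) (reduct_elem I ` B)"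
    then have "sat_head I H"
      using closed sat_body_reduct_mono[of "I \<inter> prog_vars P" I] by (fastforce simp: closed_under_reduct_iff)
    moreover have "head_vars H \<subseteq> prog_vars P" using HB(1) by (auto simp: prog_vars_def)
    ultimately show "sat_head (I \<inter> prog_vars P) H" by (cases H) auto
  qed
  then show ?thesis using minimal by blast
qed

lemma Ans_eqI:
  assumes "prog_vars P' = prog_vars P"
    and "\<And>I. I \<subseteq> prog_vars P \<Longrightarrow> answer_set P' I \<longleftrightarrow> answer_set P I"
  shows "Ans P' = Ans P"
proof -
  have "answer_set P' I \<longleftrightarrow> answer_set P I" for I
    using assms answer_set_subset_prog_vars[of P' I] answer_set_subset_prog_vars[of P I] by blast
  then show ?thesis by (simp add: Ans_def)
qed

lemma prog_vars_insert:
  "prog_vars (insert (H, B) P) = head_vars H \<union> (\<Union>e\<in>B. elem_vars e) \<union> prog_vars P"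
  by (auto simp: prog_vars_def)

lemma sat_body_insert_var:
  assumes "sat_body I (B - {NNeg x})" "Pos x \<notin> B" "Neg x \<notin> B"
  shows "sat_body (insert x I) B"
proof -
  have "sat_elem (insert x I) e" if "e \<in> B" for e
  proof -
    have "e = NNeg x \<or> sat_elem I e"
      using that assms(1) by (auto simp: sat_body_def)
    then show ?thesis
      using that assms(2,3) by (cases e) auto
  qed
  then show ?thesis by (simp add: sat_body_def)
qed

definition nonstandard_rules :: "nat \<Rightarrow> program \<Rightarrow> rule set" where
  "nonstandard_rules n P =
     {r \<in> P. \<exists>x B. r = (HVar x, B) \<and> card (S n (insert (Pos x) B)) = 1 \<and> NNeg x \<in> B}"

lemma standard_iff_no_nonstandard_rules:
  "standard n P \<longleftrightarrow> parity_program n P \<and> nonstandard_rules n P = {}"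
  by (auto simp: standard_def nonstandard_rules_def)

lemma parity_program_replace_rule:
  assumes "parity_program n P" "finite B'"
    and "prog_vars (insert (H', B') (P - {r})) = prog_vars P"
    and "Ans (insert (H', B') (P - {r})) = Ans P"
  shows "parity_program n (insert (H', B') (P - {r}))"
  using assms by (auto simp: parity_program_def canonical_def)

text \<open>As "not not x" occurs in B, the unique model I0 of B is also the unique model of B + {x}
  required in the definition of a nonstandard rule.\<close>

locale nonstandard_rule =
  fixes n :: nat and P :: program and x :: nat and B :: "elem set" and I0 :: "nat set"
  assumes parity: "parity_program n P"
    and rule: "(HVar x, B) \<in> P"
    and nnot: "NNeg x \<in> B"
    and no_pos: "Pos x \<notin> B"
    and unique_model: "S n B = {I0}"
begin

lemma I0_subset: "I0 \<subseteq> {1..n}"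
  and I0_sat: "sat_body I0 B"
  using unique_model by (auto simp: S_def)

lemma x_in_I0: "x \<in> I0"
  using I0_sat nnot by (auto simp: sat_body_def)

lemma no_neg: "Neg x \<notin> B"
  using I0_sat x_in_I0 by (auto simp: sat_body_def)

lemma eq_I0: "I \<subseteq> {1..n} \<Longrightarrow> sat_body I B \<Longrightarrow> I = I0"
  using unique_model by (auto simp: S_def)

lemma finite_body: "finite B"
  using parity rule by (auto simp: parity_program_def canonical_def)

lemma prog_vars_P: "prog_vars P = {1..n}"
  using parity by (simp add: parity_program_def)

lemma not_answer_set_even: "even (card I) \<Longrightarrow> \<not> answer_set P I"
  using parity by (auto simp: parity_program_def PARITY_def Ans_def)

lemma prog_vars_replace_rule:
  assumes "(\<Union>e\<in>B'. elem_vars e) \<union> head_vars H' = (\<Union>e\<in>B. elem_vars e)"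
  shows "prog_vars (insert (H', B') (P - {(HVar x, B)})) = prog_vars P"
proof -
  have "x \<in> (\<Union>e\<in>B. elem_vars e)"
    using nnot by force
  moreover have "prog_vars P = prog_vars (insert (HVar x, B) (P - {(HVar x, B)}))"
    using rule by (simp add: insert_absorb)
  ultimately show ?thesis
    using assms unfolding prog_vars_insert by auto
qed

lemma prog_vars_constraint_replacement:
  "prog_vars (insert (HBot, B) (P - {(HVar x, B)})) = prog_vars P"
  by (rule prog_vars_replace_rule) simp

lemma prog_vars_drop_nnot_replacement:
  "prog_vars (insert (HVar x, B - {NNeg x}) (P - {(HVar x, B)})) = prog_vars P"
  by (rule prog_vars_replace_rule) (use nnot in force)

lemma Ans_constraint_replacement:
  assumes "even (card I0)"
  shows "Ans (insert (HBot, B) (P - {(HVar x, B)})) = Ans P"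
proof (rule Ans_eqI[OF prog_vars_constraint_replacement])
  fix I assume "I \<subseteq> prog_vars P"
  then have I: "I \<subseteq> {1..n}" by (simp add: prog_vars_P)
  show "answer_set (insert (HBot, B) (P - {(HVar x, B)})) I \<longleftrightarrow> answer_set P I"
  proof (cases "sat_body I B")
    case True
    then have "\<not> answer_set (insert (HBot, B) (P - {(HVar x, B)})) I"
      by (intro violated_rule_not_answer_set[of HBot B]) simp_all
    moreover have "\<not> answer_set P I"
      using eq_I0[OF I True] assms not_answer_set_even by simp
    ultimately show ?thesis by simp
  next
    case False
    then show ?thesis by (rule answer_set_replace_unsatisfied_rule[OF rule _ False])
  qed
qed

lemma Ans_drop_nnot_replacement:
  assumes "odd (card I0)"
  shows "Ans (insert (HVar x, B - {NNeg x}) (P - {(HVar x, B)})) = Ans P"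
proof (rule Ans_eqI[OF prog_vars_drop_nnot_replacement])
  let ?B' = "B - {NNeg x}"
  fix I assume "I \<subseteq> prog_vars P"
  then have I: "I \<subseteq> {1..n}" by (simp add: prog_vars_P)
  consider (x_in) "x \<in> I" | (model) "x \<notin> I" "sat_body I ?B'"
    | (no_model) "x \<notin> I" "\<not> sat_body I ?B'"
    by blast
  then show "answer_set (insert (HVar x, ?B') (P - {(HVar x, B)})) I \<longleftrightarrow> answer_set P I"
  proof cases
    case x_in
    then have "reduct_elem I ` B = insert ETop (reduct_elem I ` ?B')"
      using nnot by force
    then have "closed_under J (reduct {(HVar x, ?B')} I) \<longleftrightarrow> closed_under J (reduct {(HVar x, B)} I)"
      for J by (simp add: sat_body_def)
    then show ?thesis by (rule answer_set_replace_rule[OF rule])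
  next
    case model
    have "insert x I = I0"
      using I x_in_I0 I0_subset sat_body_insert_var[OF model(2) no_pos no_neg] by (intro eq_I0) auto
    then have "card I0 = Suc (card I)"
      using model(1) finite_subset[OF I] by force
    then have "\<not> answer_set P I"
      using assms not_answer_set_even by simp
    moreover have "\<not> answer_set (insert (HVar x, ?B') (P - {(HVar x, B)})) I"
      using model by (intro violated_rule_not_answer_set[of "HVar x" ?B']) simp_all
    ultimately show ?thesis by simp
  next
    case no_model
    have "\<not> sat_body I B"
      using no_model(1) nnot unfolding sat_body_def by force
    then show ?thesis by (rule answer_set_replace_unsatisfied_rule[OF rule _ no_model(2)])
  qed
qed

end

lemma replace_nonstandard_rule:
  assumes "finite P" "no_self_dep P" "bodies_consistent n P" "r \<in> nonstandard_rules n P"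
    and "\<And>y. H' = HVar y \<Longrightarrow> Pos y \<notin> B' \<and> NNeg y \<notin> B'" "consistent n B'"
  shows "no_self_dep (insert (H', B') (P - {r}))"
    and "bodies_consistent n (insert (H', B') (P - {r}))"
    and "card (insert (H', B') (P - {r})) \<le> card P"
    and "nonstandard_rules n (insert (H', B') (P - {r})) \<subset> nonstandard_rules n P"
proof -
  have r: "r \<in> P" using assms(4) by (simp add: nonstandard_rules_def)
  show "no_self_dep (insert (H', B') (P - {r}))"
    using assms(2,5) by (auto simp: no_self_dep_def body_var_def)
  show "bodies_consistent n (insert (H', B') (P - {r}))"
    using assms(3,6) by (auto simp: bodies_consistent_def)
  have "card (P - {r}) < card P"
    using assms(1) r by (rule card_Diff1_less)
  then show "card (insert (H', B') (P - {r})) \<le> card P"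
    using assms(1) by (simp add: card_insert_if)
  have "nonstandard_rules n (insert (H', B') (P - {r})) \<subseteq> nonstandard_rules n P - {r}"
    using assms(5) by (auto simp: nonstandard_rules_def)
  then show "nonstandard_rules n (insert (H', B') (P - {r})) \<subset> nonstandard_rules n P"
    using assms(4) by blast
qed

lemma remove_nonstandard_rule:
  assumes P: "parity_program n P" "no_self_dep P" "bodies_consistent n P"
    and r: "r \<in> nonstandard_rules n P"
  obtains P' where "parity_program n P'" "no_self_dep P'" "bodies_consistent n P'"
    "card P' \<le> card P" "nonstandard_rules n P' \<subset> nonstandard_rules n P"
proof -
  obtain x B where r_eq: "r = (HVar x, B)" and rule: "(HVar x, B) \<in> P"
    and card_S: "card (S n (insert (Pos x) B)) = 1" and nnot: "NNeg x \<in> B"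
    using r by (auto simp: nonstandard_rules_def)
  have "S n (insert (Pos x) B) = S n B"
    using nnot by (auto simp: S_def sat_body_def)
  with card_S obtain I0 where I0: "S n B = {I0}"
    by (metis card_1_singletonE)
  have "Pos x \<notin> B"
    using P(2) rule by (auto simp: no_self_dep_def body_var_def)
  then interpret nonstandard_rule n P x B I0
    using P(1) rule nnot I0 by unfold_locales
  have fin: "finite P"
    using P(1) by (simp add: parity_program_def canonical_def)
  note replace = replace_nonstandard_rule[OF fin P(2,3) r]
  have I0_model: "I0 \<in> S n B"
    using I0 by simp
  show thesis
  proof (cases "even (card I0)")
    case True
    have "consistent n B"
      using I0_model by (auto simp: consistent_def)
    moreover have "parity_program n (insert (HBot, B) (P - {(HVar x, B)}))"
      by (intro parity_program_replace_rule[OF P(1) finite_body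
          prog_vars_constraint_replacement Ans_constraint_replacement[OF True]])
    ultimately show thesis
      using that replace[of HBot B] unfolding r_eq by auto
  next
    case False
    have "I0 \<in> S n (B - {NNeg x})"
      using I0_model by (auto simp: S_def sat_body_def)
    then have "consistent n (B - {NNeg x})"
      by (auto simp: consistent_def)
    moreover have "parity_program n (insert (HVar x, B - {NNeg x}) (P - {(HVar x, B)}))"
      using finite_body False by (intro parity_program_replace_rule[OF P(1) _
          prog_vars_drop_nnot_replacement Ans_drop_nnot_replacement]) simp_all
    ultimately show thesis
      using that replace[of "HVar x" "B - {NNeg x}"] \<open>Pos x \<notin> B\<close> unfolding r_eq by blast
  qed
qed

theorem mainTheorem12:
  fixes n :: nat and P :: program
  assumes "parity_program n P"
    and "no_self_dep P"
    and "bodies_consistent n P"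
  shows "\<exists>P'. standard n P' \<and> no_self_dep P' \<and> bodies_consistent n P' \<and> card P' \<le> card P"
  using assms
proof (induction "card (nonstandard_rules n P)" arbitrary: P rule: less_induct)
  case less
  show ?case
  proof (cases "nonstandard_rules n P = {}")
    case True
    then show ?thesis
      using less.prems by (auto simp: standard_iff_no_nonstandard_rules)
  next
    case False
    then obtain r where "r \<in> nonstandard_rules n P" by blast
    then obtain P' where P': "parity_program n P'" "no_self_dep P'" "bodies_consistent n P'"
      "card P' \<le> card P" "nonstandard_rules n P' \<subset> nonstandard_rules n P"
      using remove_nonstandard_rule less.prems by metis
    have "finite (nonstandard_rules n P)"
      using less.prems(1) by (auto simp: parity_program_def canonical_def nonstandard_rules_def)
    then have "card (nonstandard_rules n P') < card (nonstandard_rules n P)"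
      using P'(5) by (rule psubset_card_mono)
    then show ?thesis
      using less.hyps P'(1-4) le_trans by meson
  qed
qed

end
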